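(* Let $(M_t)_{t=0}^n$ be a square-integrable martingale adapted to a filtration $(\mathcal F_t)_{t=0}^n$ with $M_0=0$. Then for all $x,\beta>0$ and $\alpha\ge0$, $$P\Big(\bigcup_{t=1}^n\big\{M_t\ge x\ \text{and}\ \langle M\rangle_t+[M]_t\le\alpha M_t+\beta\big\}\Big)\le\exp\Big(-\min\Big\{\frac{x^2}{8\beta},\frac{x}{6\alpha}\Big\}\Big),$$ with the convention $x/(6\alpha)=+\infty$ when $\alpha=0$.
   Context: For $t\ge1$, $\langle M\rangle_t=\sum_{i=1}^t\mathbb E[(M_i-M_{i-1})^2\mid\mathcal F_{i-1}]$ (total conditional variance) and $[M]_t=\sum_{i=1}^t(M_i-M_{i-1})^2$ (total quadratic variation). *)

theory Defs
  imports "HOL-Probability.Probability"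
begin

definition sq_int_martingale ::
  "'a measure \<Rightarrow> (nat \<Rightarrow> 'a measure) \<Rightarrow> nat \<Rightarrow> (nat \<Rightarrow> 'a \<Rightarrow> real) \<Rightarrow> bool" where
  "sq_int_martingale P F n X \<longleftrightarrow>
     (\<forall>t\<le>n. subalgebra P (F t)) \<and>
     (\<forall>s t. s \<le> t \<longrightarrow> t \<le> n \<longrightarrow> sets (F s) \<subseteq> sets (F t)) \<and>
     (\<forall>t\<le>n. X t \<in> borel_measurable (F t)) \<and>
     (\<forall>t\<le>n. integrable P (X t)) \<and>
     (\<forall>t\<le>n. integrable P (\<lambda>\<omega>. (X t \<omega>)\<^sup>2)) \<and>
     (\<forall>t<n. AE \<omega> in P. real_cond_exp P (F t) (X (Suc t)) \<omega> = X t \<omega>)"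

definition cond_var ::
  "'a measure \<Rightarrow> (nat \<Rightarrow> 'a measure) \<Rightarrow> (nat \<Rightarrow> 'a \<Rightarrow> real) \<Rightarrow> nat \<Rightarrow> 'a \<Rightarrow> real" where
  "cond_var P F X t \<omega> =
     (\<Sum>i\<in>{1..t}. real_cond_exp P (F (i - 1)) (\<lambda>\<eta>. (X i \<eta> - X (i - 1) \<eta>)\<^sup>2) \<omega>)"

definition quad_var :: "(nat \<Rightarrow> 'a \<Rightarrow> real) \<Rightarrow> nat \<Rightarrow> 'a \<Rightarrow> real" where
  "quad_var X t \<omega> = (\<Sum>i\<in>{1..t}. (X i \<omega> - X (i - 1) \<omega>)\<^sup>2)"

end

theory Submission
  imports Defs
begin

text \<open>
  For \<open>l > 0\<close> the process \<open>W\<^sub>t = exp (l M\<^sub>t - l\<^sup>2/2 (\<langle>M\<rangle>\<^sub>t + [M]\<^sub>t))\<close> is a nonnegative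
  supermartingale with \<open>W\<^sub>0 = 1\<close>: writing \<open>y = l \<Delta>M\<^sub>t\<close>, the elementary bound
  \<open>exp (y - y\<^sup>2/2) \<le> 1 + y + y\<^sup>2/2\<close> has conditional expectation at most
  \<open>1 + l\<^sup>2/2 E[\<Delta>M\<^sub>t\<^sup>2 | F\<^sub>t\<^sub>-\<^sub>1] \<le> exp (l\<^sup>2/2 E[\<Delta>M\<^sub>t\<^sup>2 | F\<^sub>t\<^sub>-\<^sub>1])\<close>, because the martingale
  property kills the linear term. Ville's maximal inequality gives \<open>P(\<exists>t. W\<^sub>t \<ge> c) \<le> 1/c\<close>.
  On the event in question the choice \<open>l = x / (\<alpha> x + \<beta>)\<close> forces
  \<open>W\<^sub>t \<ge> exp (x\<^sup>2 / (2 (\<alpha> x + \<beta>)))\<close>, and this exponent dominates the stated minimum.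
\<close>

lemma exp_minus_half_square_le:
  fixes y :: real
  shows "exp (y - y\<^sup>2 / 2) \<le> 1 + y + y\<^sup>2 / 2"
proof -
  define h where "h = (\<lambda>y::real. (1 + y + y\<^sup>2 / 2) * exp (y\<^sup>2 / 2 - y))"
  have h_deriv: "DERIV h z :> exp (z\<^sup>2 / 2 - z) * (z * (1 + z / 2 + z\<^sup>2 / 2))" for z
  proof -
    have "DERIV h z :> (1 + z) * exp (z\<^sup>2 / 2 - z) + (1 + z + z\<^sup>2 / 2) * (exp (z\<^sup>2 / 2 - z) * (z - 1))"
      unfolding h_def by (auto intro!: derivative_eq_intros simp: power2_eq_square field_simps)
    then show ?thesis
      by (simp add: algebra_simps power2_eq_square)
  qed
  have quadratic_pos: "1 + z / 2 + z\<^sup>2 / 2 > 0" for z :: real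
    using zero_le_power2[of "z + 1/2"] by (simp add: power2_eq_square algebra_simps)
  have "h 0 \<le> h y"
  proof (cases "y \<ge> 0")
    case True
    show ?thesis
      by (rule DERIV_nonneg_imp_nondecreasing[OF True])
        (use h_deriv quadratic_pos in \<open>metis less_eq_real_def mult_nonneg_nonneg exp_ge_zero\<close>)
  next
    case False
    show ?thesis
    proof (rule DERIV_nonpos_imp_nonincreasing[of y 0])
      show "y \<le> 0" using False by simp
    qed (use h_deriv quadratic_pos in
          \<open>metis exp_ge_zero less_eq_real_def mult_nonneg_nonpos mult_nonpos_nonneg\<close>)
  qed
  then have "1 \<le> (1 + y + y\<^sup>2 / 2) * exp (y\<^sup>2 / 2 - y)"
    by (simp add: h_def)
  then have "exp (y - y\<^sup>2 / 2) * 1 \<le> exp (y - y\<^sup>2 / 2) * ((1 + y + y\<^sup>2 / 2) * exp (y\<^sup>2 / 2 - y))"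
    by (intro mult_left_mono) auto
  also have "\<dots> = 1 + y + y\<^sup>2 / 2"
    by (simp add: mult.left_commute exp_add[symmetric])
  finally show ?thesis by simp
qed

lemma diff_half_square_le:
  fixes y :: real
  shows "y - y\<^sup>2 / 2 \<le> 1 / 2"
  using zero_le_power2[of "y - 1"] by (simp add: power2_eq_square algebra_simps)

lemma bernstein_exponent_le:
  fixes x \<alpha> \<beta> Y V :: real
  assumes "0 < x" "0 < \<beta>" "0 \<le> \<alpha>" "x \<le> Y" "V \<le> \<alpha> * Y + \<beta>"
  defines "l \<equiv> x / (\<alpha> * x + \<beta>)"
  shows "x\<^sup>2 / (2 * (\<alpha> * x + \<beta>)) \<le> l * Y - l\<^sup>2 / 2 * V"
proof -
  define s where "s = \<alpha> * x + \<beta>"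
  have s_pos: "0 < s"
    using assms(1-3) unfolding s_def by (simp add: add_nonneg_pos)
  have l_pos: "0 < l"
    using assms(1) s_pos unfolding l_def s_def by simp
  \<comment> \<open>\<open>l \<alpha> \<le> 1\<close>, so the exponent \<open>l Y - l\<^sup>2 (\<alpha> Y + \<beta>)/2\<close> is nondecreasing in \<open>Y\<close>\<close>
  have slope_nonneg: "0 \<le> l - l\<^sup>2 * \<alpha> / 2"
  proof -
    have "l * \<alpha> \<le> 1"
      using assms(2) s_pos unfolding l_def s_def[symmetric] by (simp add: field_simps s_def)
    then have "l * (l * \<alpha>) \<le> l * 1"
      using l_pos by (intro mult_left_mono) auto
    then show ?thesis
      using l_pos by (simp add: power2_eq_square algebra_simps)
  qed
  have "x\<^sup>2 / (2 * s) = l * x - l\<^sup>2 * s / 2"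
    using s_pos unfolding l_def s_def[symmetric] by (simp add: field_simps power2_eq_square)
  also have "\<dots> = (l - l\<^sup>2 * \<alpha> / 2) * x - l\<^sup>2 * \<beta> / 2"
    by (simp add: s_def algebra_simps)
  also have "\<dots> \<le> (l - l\<^sup>2 * \<alpha> / 2) * Y - l\<^sup>2 * \<beta> / 2"
    using assms(4) slope_nonneg by (simp add: mult_left_mono)
  also have "\<dots> = l * Y - l\<^sup>2 / 2 * (\<alpha> * Y + \<beta>)"
    by (simp add: algebra_simps)
  also have "\<dots> \<le> l * Y - l\<^sup>2 / 2 * V"
    using assms(5) by (simp add: mult_left_mono)
  finally show ?thesis
    unfolding s_def .
qed

lemma exp_bernstein_exponent_le:
  fixes x \<alpha> \<beta> :: real
  assumes "0 < x" "0 < \<beta>" "0 \<le> \<alpha>"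
  shows "exp (- (x\<^sup>2 / (2 * (\<alpha> * x + \<beta>))))
    \<le> (if \<alpha> = 0 then exp (- (x\<^sup>2 / (8 * \<beta>))) else exp (- min (x\<^sup>2 / (8 * \<beta>)) (x / (6 * \<alpha>))))"
proof (cases "\<alpha> = 0")
  case True
  have "x\<^sup>2 / (8 * \<beta>) \<le> x\<^sup>2 / (2 * \<beta>)"
    using assms(2) by (intro divide_left_mono) auto
  then show ?thesis
    using True by simp
next
  case False
  then have \<alpha>_pos: "0 < \<alpha>"
    using assms(3) by simp
  have "min (x\<^sup>2 / (8 * \<beta>)) (x / (6 * \<alpha>)) \<le> x\<^sup>2 / (2 * (\<alpha> * x + \<beta>))"
  proof (cases "\<alpha> * x \<le> \<beta>")
    case True
    have "x\<^sup>2 / (8 * \<beta>) \<le> x\<^sup>2 / (2 * (\<alpha> * x + \<beta>))"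
      using True assms(1,2) \<alpha>_pos by (intro divide_left_mono) (auto intro!: mult_pos_pos add_pos_pos)
    then show ?thesis
      by linarith
  next
    case False
    have "x / (6 * \<alpha>) = x\<^sup>2 / (6 * (\<alpha> * x))"
      using assms(1) \<alpha>_pos by (simp add: power2_eq_square)
    also have "\<dots> \<le> x\<^sup>2 / (2 * (\<alpha> * x + \<beta>))"
      using False assms(1,2) \<alpha>_pos by (intro divide_left_mono) (auto intro!: mult_pos_pos add_pos_pos)
    finally show ?thesis
      by linarith
  qed
  then show ?thesis
    using False by simp
qed

lemma integrable_bounded_mult:
  fixes f g :: "'a \<Rightarrow> real"
  assumes "integrable M f" "g \<in> borel_measurable M" "AE \<omega> in M. \<bar>g \<omega>\<bar> \<le> K"
  shows "integrable M (\<lambda>\<omega>. g \<omega> * f \<omega>)"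
proof (rule Bochner_Integration.integrable_bound[where f="\<lambda>\<omega>. K * f \<omega>"])
  show "integrable M (\<lambda>\<omega>. K * f \<omega>)"
    using assms(1) by simp
  show "(\<lambda>\<omega>. g \<omega> * f \<omega>) \<in> borel_measurable M"
    using assms(1,2) by measurable
  show "AE \<omega> in M. norm (g \<omega> * f \<omega>) \<le> norm (K * f \<omega>)"
    using assms(3) by eventually_elim (auto simp: abs_mult intro: mult_right_mono)
qed

lemma integrable_square_diff:
  fixes f g :: "'a \<Rightarrow> real"
  assumes "integrable M (\<lambda>\<omega>. (f \<omega>)\<^sup>2)" "integrable M (\<lambda>\<omega>. (g \<omega>)\<^sup>2)"
    and "f \<in> borel_measurable M" "g \<in> borel_measurable M"
  shows "integrable M (\<lambda>\<omega>. (f \<omega> - g \<omega>)\<^sup>2)"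
proof (rule Bochner_Integration.integrable_bound[where f="\<lambda>\<omega>. 2 * (f \<omega>)\<^sup>2 + 2 * (g \<omega>)\<^sup>2"])
  show "integrable M (\<lambda>\<omega>. 2 * (f \<omega>)\<^sup>2 + 2 * (g \<omega>)\<^sup>2)"
    using assms(1,2) by simp
  show "(\<lambda>\<omega>. (f \<omega> - g \<omega>)\<^sup>2) \<in> borel_measurable M"
    using assms(3,4) by measurable
  have "(f \<omega> - g \<omega>)\<^sup>2 \<le> 2 * (f \<omega>)\<^sup>2 + 2 * (g \<omega>)\<^sup>2" for \<omega>
    using zero_le_power2[of "f \<omega> + g \<omega>"] by (simp add: power2_eq_square algebra_simps)
  then show "AE \<omega> in M. norm ((f \<omega> - g \<omega>)\<^sup>2) \<le> norm (2 * (f \<omega>)\<^sup>2 + 2 * (g \<omega>)\<^sup>2)"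
    by simp
qed

lemma sets_all_less_level:
  fixes W :: "nat \<Rightarrow> 'a \<Rightarrow> real"
  assumes "subalgebra M N" "\<And>t. t \<le> k \<Longrightarrow> W t \<in> borel_measurable N"
  shows "{\<omega> \<in> space M. \<forall>t\<le>k. W t \<omega> < c} \<in> sets N"
proof -
  have "{\<omega> \<in> space M. \<forall>t\<le>k. W t \<omega> < c} = (\<Inter>t\<in>{..k}. {\<omega> \<in> space N. W t \<omega> < c}) \<inter> space N"
    using assms(1) by (auto simp: subalgebra_def)
  also have "\<dots> \<in> sets N"
    using assms(2) by (intro sets.Int sets.finite_INT sets.top) auto
  finally show ?thesis .
qed

lemma (in prob_space) nonneg_supermartingale_maximal_ineq:
  fixes F :: "nat \<Rightarrow> 'a measure" and W :: "nat \<Rightarrow> 'a \<Rightarrow> real"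
  assumes subalg: "\<And>t. t \<le> n \<Longrightarrow> subalgebra M (F t)"
    and filtration: "\<And>s t. s \<le> t \<Longrightarrow> t \<le> n \<Longrightarrow> subalgebra (F t) (F s)"
    and adapted: "\<And>t. t \<le> n \<Longrightarrow> W t \<in> borel_measurable (F t)"
    and integrable: "\<And>t. t \<le> n \<Longrightarrow> integrable M (W t)"
    and nonneg: "\<And>t \<omega>. 0 \<le> W t \<omega>"
    and supermartingale: "\<And>s B. s < n \<Longrightarrow> B \<in> sets (F s) \<Longrightarrow>
      (\<integral>\<omega>. W (Suc s) \<omega> * indicator B \<omega> \<partial>M) \<le> (\<integral>\<omega>. W s \<omega> * indicator B \<omega> \<partial>M)"
    and "c > 0"
  shows "c * prob {\<omega> \<in> space M. \<exists>t\<le>n. c \<le> W t \<omega>} \<le> (\<integral>\<omega>. W 0 \<omega> \<partial>M)"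
proof -
  define D where "D k = {\<omega> \<in> space M. \<forall>t\<le>k. W t \<omega> < c}" for k
  \<comment> \<open>\<open>W\<close> stopped at level \<open>c\<close>, with the overshoot cut down to \<open>c\<close>\<close>
  define I where "I k = (\<lambda>\<omega>. c * indicator (space M - D k) \<omega> + W k \<omega> * indicator (D k) \<omega>)" for k
  have D_F: "D k \<in> sets (F k)" if "k \<le> n" for k
    unfolding D_def using that subalg
    by (intro sets_all_less_level) (auto intro: measurable_from_subalg[OF filtration adapted])
  have D_M: "D k \<in> sets M" if "k \<le> n" for k
    using D_F[OF that] subalg[OF that] by (auto simp: subalgebra_def)
  have integrable_I: "integrable M (I k)" if "k \<le> n" for k
    unfolding I_def using D_M[OF that] integrable[OF that]
    by (intro Bochner_Integration.integrable_add integrable_real_mult_indicator integrable_mult_right)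
      (auto simp: less_top[symmetric])
  have "(\<integral>\<omega>. I k \<omega> \<partial>M) \<le> (\<integral>\<omega>. W 0 \<omega> \<partial>M)" if "k \<le> n" for k
    using that
  proof (induction k)
    case 0
    have "I 0 \<omega> \<le> W 0 \<omega>" for \<omega>
      by (auto simp: I_def D_def indicator_def nonneg)
    then show ?case
      by (intro integral_mono integrable_I integrable) auto
  next
    case (Suc k)
    have "I (Suc k) \<omega> \<le> c * indicator (space M - D k) \<omega> + W (Suc k) \<omega> * indicator (D k) \<omega>" for \<omega>
      by (auto simp: I_def D_def indicator_def le_Suc_eq nonneg)
    then have "(\<integral>\<omega>. I (Suc k) \<omega> \<partial>M)
        \<le> (\<integral>\<omega>. c * indicator (space M - D k) \<omega> + W (Suc k) \<omega> * indicator (D k) \<omega> \<partial>M)"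
      using Suc.prems D_M[of k] integrable[OF Suc.prems]
      by (intro integral_mono integrable_I Bochner_Integration.integrable_add
          integrable_real_mult_indicator integrable_mult_right) (auto simp: less_top[symmetric])
    also have "\<dots> = c * prob (space M - D k) + (\<integral>\<omega>. W (Suc k) \<omega> * indicator (D k) \<omega> \<partial>M)"
      using Suc.prems D_M[of k] integrable[OF Suc.prems]
      by (subst Bochner_Integration.integral_add)
        (auto intro!: integrable_real_mult_indicator simp: less_top[symmetric])
    also have "\<dots> \<le> c * prob (space M - D k) + (\<integral>\<omega>. W k \<omega> * indicator (D k) \<omega> \<partial>M)"
      using Suc.prems by (simp add: supermartingale D_F)
    also have "\<dots> = (\<integral>\<omega>. I k \<omega> \<partial>M)"
      using Suc.prems D_M[of k] integrable[of k] unfolding I_def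
      by (subst Bochner_Integration.integral_add)
        (auto intro!: integrable_real_mult_indicator simp: less_top[symmetric])
    finally show ?case
      using Suc by simp
  qed
  moreover have "c * prob (space M - D n) \<le> (\<integral>\<omega>. I n \<omega> \<partial>M)"
    using D_M[of n] integrable[of n] unfolding I_def
    by (subst Bochner_Integration.integral_add)
      (auto intro!: integrable_real_mult_indicator integral_nonneg simp: less_top[symmetric] nonneg)
  moreover have "{\<omega> \<in> space M. \<exists>t\<le>n. c \<le> W t \<omega>} = space M - D n"
    by (auto simp: D_def not_less)
  ultimately show ?thesis
    by fastforce
qed

locale zero_start_martingale = prob_space M for M :: "'a measure" +
  fixes F :: "nat \<Rightarrow> 'a measure" and n :: nat and X :: "nat \<Rightarrow> 'a \<Rightarrow> real"
  assumes martingale: "sq_int_martingale M F n X"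
    and start_zero: "\<forall>\<omega>\<in>space M. X 0 \<omega> = 0"
begin

lemma subalgebra_F: "t \<le> n \<Longrightarrow> subalgebra M (F t)"
  using martingale unfolding sq_int_martingale_def by auto

lemma sigma_finite_subalgebra_F: "t \<le> n \<Longrightarrow> sigma_finite_subalgebra M (F t)"
  by (intro finite_measure_subalgebra_is_sigma_finite)
    (simp add: finite_measure_subalgebra_def finite_measure_subalgebra_axioms_def
      subalgebra_F finite_measure_axioms)

lemma subalgebra_F_mono: "s \<le> t \<Longrightarrow> t \<le> n \<Longrightarrow> subalgebra (F t) (F s)"
  using martingale subalgebra_F[of s] subalgebra_F[of t]
  unfolding sq_int_martingale_def subalgebra_def by auto

lemma measurable_F_mono: "s \<le> t \<Longrightarrow> t \<le> n \<Longrightarrow> f \<in> borel_measurable (F s) \<Longrightarrow> f \<in> borel_measurable (F t)"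
  using measurable_from_subalg subalgebra_F_mono by blast

lemma measurable_F_M: "t \<le> n \<Longrightarrow> f \<in> borel_measurable (F t) \<Longrightarrow> f \<in> borel_measurable M"
  using measurable_from_subalg subalgebra_F by blast

lemma X_measurable_F: "s \<le> t \<Longrightarrow> t \<le> n \<Longrightarrow> X s \<in> borel_measurable (F t)"
  using martingale measurable_F_mono[of s t "X s"] unfolding sq_int_martingale_def by simp

lemma X_measurable: "t \<le> n \<Longrightarrow> X t \<in> borel_measurable M"
  using X_measurable_F measurable_F_M by blast

lemma integrable_X: "t \<le> n \<Longrightarrow> integrable M (X t)"
  and integrable_X_square: "t \<le> n \<Longrightarrow> integrable M (\<lambda>\<omega>. (X t \<omega>)\<^sup>2)"
  and cond_exp_X_Suc: "t < n \<Longrightarrow> AE \<omega> in M. real_cond_exp M (F t) (X (Suc t)) \<omega> = X t \<omega>"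
  using martingale unfolding sq_int_martingale_def by auto

lemma quad_var_Suc: "quad_var X (Suc t) \<omega> = quad_var X t \<omega> + (X (Suc t) \<omega> - X t \<omega>)\<^sup>2"
  by (simp add: quad_var_def)

lemma cond_var_Suc: "cond_var M F X (Suc t) \<omega> =
    cond_var M F X t \<omega> + real_cond_exp M (F t) (\<lambda>\<eta>. (X (Suc t) \<eta> - X t \<eta>)\<^sup>2) \<omega>"
  by (simp add: cond_var_def)

lemma quad_var_measurable_F: "t \<le> n \<Longrightarrow> quad_var X t \<in> borel_measurable (F t)"
proof (induction t)
  case (Suc t)
  then have "quad_var X t \<in> borel_measurable (F (Suc t))"
    "X t \<in> borel_measurable (F (Suc t))" "X (Suc t) \<in> borel_measurable (F (Suc t))"
    using measurable_F_mono[of t "Suc t"] X_measurable_F by auto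
  then show ?case
    unfolding quad_var_Suc by measurable
qed (simp add: quad_var_def[abs_def])

lemma cond_var_measurable_F: "t \<le> n \<Longrightarrow> cond_var M F X t \<in> borel_measurable (F t)"
proof (induction t)
  case (Suc t)
  then have "cond_var M F X t \<in> borel_measurable (F (Suc t))"
    "real_cond_exp M (F t) (\<lambda>\<eta>. (X (Suc t) \<eta> - X t \<eta>)\<^sup>2) \<in> borel_measurable (F (Suc t))"
    by (auto intro!: measurable_F_mono[of t "Suc t"] borel_measurable_cond_exp)
  then show ?case
    unfolding cond_var_Suc by measurable
qed (simp add: cond_var_def[abs_def])

lemma cond_var_nonneg: "t \<le> n \<Longrightarrow> AE \<omega> in M. 0 \<le> cond_var M F X t \<omega>"
proof (induction t)
  case (Suc t)
  interpret sigma_finite_subalgebra M "F t"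
    using Suc.prems sigma_finite_subalgebra_F by simp
  have "AE \<omega> in M. 0 \<le> real_cond_exp M (F t) (\<lambda>\<eta>. (X (Suc t) \<eta> - X t \<eta>)\<^sup>2) \<omega>"
    using Suc.prems X_measurable[of t] X_measurable[of "Suc t"] by (intro real_cond_exp_pos) auto
  with Suc show ?case
    unfolding cond_var_Suc by auto
qed (simp add: cond_var_def)

lemma integral_mult_increment_eq_0:
  assumes "s < n" "G \<in> borel_measurable (F s)" "AE \<omega> in M. \<bar>G \<omega>\<bar> \<le> K"
  shows "(\<integral>\<omega>. G \<omega> * (X (Suc s) \<omega> - X s \<omega>) \<partial>M) = 0"
proof -
  interpret sigma_finite_subalgebra M "F s"
    using assms(1) sigma_finite_subalgebra_F by simp
  have G_M [measurable]: "G \<in> borel_measurable M"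
    using assms(1,2) measurable_F_M by (meson less_imp_le)
  have [measurable]: "X s \<in> borel_measurable M"
    using assms(1) X_measurable by simp
  have integrable: "integrable M (\<lambda>\<omega>. G \<omega> * X t \<omega>)" if "t \<le> n" for t
    using integrable_bounded_mult[OF integrable_X[OF that] G_M assms(3)] .
  have "(\<integral>\<omega>. G \<omega> * X (Suc s) \<omega> \<partial>M) = (\<integral>\<omega>. G \<omega> * real_cond_exp M (F s) (X (Suc s)) \<omega> \<partial>M)"
    using assms(1,2) by (intro real_cond_exp_intg(2)[symmetric] integrable X_measurable) auto
  also have "\<dots> = (\<integral>\<omega>. G \<omega> * X s \<omega> \<partial>M)"
    using cond_exp_X_Suc[OF assms(1)] by (intro integral_cong_AE) (auto elim!: eventually_mono)
  finally show ?thesis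
    using assms(1) integrable[of s] integrable[of "Suc s"] by (simp add: right_diff_distrib)
qed

lemma integrable_square_increment:
  "Suc s \<le> n \<Longrightarrow> integrable M (\<lambda>\<omega>. (X (Suc s) \<omega> - X s \<omega>)\<^sup>2)"
  by (intro integrable_square_diff integrable_X_square X_measurable) auto

lemma integral_mult_square_increment:
  assumes "s < n" "G \<in> borel_measurable (F s)" "AE \<omega> in M. \<bar>G \<omega>\<bar> \<le> K"
  shows "(\<integral>\<omega>. G \<omega> * (X (Suc s) \<omega> - X s \<omega>)\<^sup>2 \<partial>M) =
    (\<integral>\<omega>. G \<omega> * real_cond_exp M (F s) (\<lambda>\<eta>. (X (Suc s) \<eta> - X s \<eta>)\<^sup>2) \<omega> \<partial>M)"
proof -
  interpret sigma_finite_subalgebra M "F s"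
    using assms(1) sigma_finite_subalgebra_F by simp
  have "G \<in> borel_measurable M"
    using assms(1,2) measurable_F_M by (meson less_imp_le)
  moreover have [measurable]: "X s \<in> borel_measurable M" "X (Suc s) \<in> borel_measurable M"
    using assms(1) X_measurable by simp_all
  ultimately show ?thesis
    using assms integrable_bounded_mult[OF integrable_square_increment]
    by (intro real_cond_exp_intg(2)[symmetric]) auto
qed

definition exp_supermartingale :: "real \<Rightarrow> nat \<Rightarrow> 'a \<Rightarrow> real" where
  "exp_supermartingale l t \<omega> = exp (l * X t \<omega> - l\<^sup>2 / 2 * (cond_var M F X t \<omega> + quad_var X t \<omega>))"

lemma exp_supermartingale_pos: "0 < exp_supermartingale l t \<omega>"
  by (simp add: exp_supermartingale_def)

lemma exp_supermartingale_0: "\<omega> \<in> space M \<Longrightarrow> exp_supermartingale l 0 \<omega> = 1"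
  using start_zero by (simp add: exp_supermartingale_def cond_var_def quad_var_def)

lemma exp_supermartingale_measurable_F: "t \<le> n \<Longrightarrow> exp_supermartingale l t \<in> borel_measurable (F t)"
  unfolding exp_supermartingale_def
  using X_measurable_F[of t t] cond_var_measurable_F[of t] quad_var_measurable_F[of t] by measurable

lemma exp_supermartingale_measurable: "t \<le> n \<Longrightarrow> exp_supermartingale l t \<in> borel_measurable M"
  using exp_supermartingale_measurable_F measurable_F_M by blast

text \<open>The quadratic variation term makes the exponential process bounded, which settles all
  integrability questions.\<close>
lemma exponent_quad_var_le:
  "\<omega> \<in> space M \<Longrightarrow> l * X t \<omega> - l\<^sup>2 / 2 * quad_var X t \<omega> \<le> real t / 2"
proof (induction t)
  case 0
  then show ?case
    using start_zero by (simp add: quad_var_def)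
next
  case (Suc t)
  define y where "y = l * (X (Suc t) \<omega> - X t \<omega>)"
  have "y - y\<^sup>2 / 2 \<le> 1 / 2"
    by (rule diff_half_square_le)
  moreover have "l * X (Suc t) \<omega> - l\<^sup>2 / 2 * quad_var X (Suc t) \<omega>
      = (l * X t \<omega> - l\<^sup>2 / 2 * quad_var X t \<omega>) + (y - y\<^sup>2 / 2)"
    unfolding quad_var_Suc y_def power2_eq_square by (simp add: field_simps)
  ultimately show ?case
    using Suc by simp
qed

lemma exp_supermartingale_bounded:
  assumes "t \<le> n"
  shows "AE \<omega> in M. \<bar>exp_supermartingale l t \<omega>\<bar> \<le> exp (real t / 2)"
  using cond_var_nonneg[OF assms] AE_space
proof eventually_elim
  case (elim \<omega>)
  then have "l * X t \<omega> - l\<^sup>2 / 2 * (cond_var M F X t \<omega> + quad_var X t \<omega>)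
      \<le> l * X t \<omega> - l\<^sup>2 / 2 * quad_var X t \<omega>"
    by (simp add: algebra_simps)
  also have "\<dots> \<le> real t / 2"
    using exponent_quad_var_le elim by blast
  finally show ?case
    using exp_supermartingale_pos[of l t \<omega>] by (simp add: exp_supermartingale_def)
qed

lemma integrable_exp_supermartingale: "t \<le> n \<Longrightarrow> integrable M (exp_supermartingale l t)"
  by (rule integrable_const_bound[OF _ exp_supermartingale_measurable])
    (use exp_supermartingale_bounded in auto)

lemma exp_supermartingale_Suc:
  "exp_supermartingale l (Suc t) \<omega> = exp_supermartingale l t \<omega>
    * exp (- (l\<^sup>2 / 2) * real_cond_exp M (F t) (\<lambda>\<eta>. (X (Suc t) \<eta> - X t \<eta>)\<^sup>2) \<omega>)
    * exp (l * (X (Suc t) \<omega> - X t \<omega>) - (l * (X (Suc t) \<omega> - X t \<omega>))\<^sup>2 / 2)"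
  unfolding exp_supermartingale_def cond_var_Suc quad_var_Suc mult_exp_exp
  by (rule arg_cong[where f=exp]) (simp add: field_simps power2_eq_square)

lemma integral_mult_exp_increment_le:
  fixes G :: "'a \<Rightarrow> real" and s :: nat
  defines "D \<equiv> \<lambda>\<omega>. X (Suc s) \<omega> - X s \<omega>"
  assumes "s < n" "G \<in> borel_measurable (F s)" "AE \<omega> in M. \<bar>G \<omega>\<bar> \<le> K" "\<And>\<omega>. 0 \<le> G \<omega>"
  shows "(\<integral>\<omega>. G \<omega> * exp (l * D \<omega> - (l * D \<omega>)\<^sup>2 / 2) \<partial>M) \<le>
    (\<integral>\<omega>. G \<omega> + l\<^sup>2 / 2 * (G \<omega> * real_cond_exp M (F s) (\<lambda>\<eta>. (D \<eta>)\<^sup>2) \<omega>) \<partial>M)"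
proof -
  interpret sigma_finite_subalgebra M "F s"
    using assms(2) sigma_finite_subalgebra_F by simp
  have s_le: "s \<le> n" "Suc s \<le> n"
    using assms(2) by auto
  have [measurable]: "X s \<in> borel_measurable M" "X (Suc s) \<in> borel_measurable M"
    using s_le X_measurable by auto
  have G_M [measurable]: "G \<in> borel_measurable M"
    using measurable_F_M[OF s_le(1) assms(3)] .
  have integrable_G: "integrable M G"
    using integrable_bounded_mult[OF integrable_const[of 1] G_M assms(4)] by simp
  have integrable_GD: "integrable M (\<lambda>\<omega>. G \<omega> * D \<omega>)"
    unfolding D_def using s_le integrable_X
    by (intro integrable_bounded_mult[OF _ G_M assms(4)]) auto
  have integrable_GD2: "integrable M (\<lambda>\<omega>. G \<omega> * (D \<omega>)\<^sup>2)"
    unfolding D_def using integrable_square_increment[OF s_le(2)]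
    by (rule integrable_bounded_mult[OF _ G_M assms(4)])
  have E_bounded: "AE \<omega> in M. \<bar>exp (l * D \<omega> - (l * D \<omega>)\<^sup>2 / 2)\<bar> \<le> exp (1 / 2)"
    using diff_half_square_le by (intro AE_I2) simp
  have "(\<lambda>\<omega>. exp (l * D \<omega> - (l * D \<omega>)\<^sup>2 / 2)) \<in> borel_measurable M"
    unfolding D_def by measurable
  from integrable_bounded_mult[OF integrable_G this E_bounded]
  have integrable_GE: "integrable M (\<lambda>\<omega>. G \<omega> * exp (l * D \<omega> - (l * D \<omega>)\<^sup>2 / 2))"
    by (simp add: mult.commute)
  have "(\<integral>\<omega>. G \<omega> * exp (l * D \<omega> - (l * D \<omega>)\<^sup>2 / 2) \<partial>M)
      \<le> (\<integral>\<omega>. G \<omega> + l * (G \<omega> * D \<omega>) + l\<^sup>2 / 2 * (G \<omega> * (D \<omega>)\<^sup>2) \<partial>M)"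
  proof (rule integral_mono[OF integrable_GE])
    show "integrable M (\<lambda>\<omega>. G \<omega> + l * (G \<omega> * D \<omega>) + l\<^sup>2 / 2 * (G \<omega> * (D \<omega>)\<^sup>2))"
      using integrable_G integrable_GD integrable_GD2 by auto
    fix \<omega>
    have "G \<omega> * exp (l * D \<omega> - (l * D \<omega>)\<^sup>2 / 2) \<le> G \<omega> * (1 + l * D \<omega> + (l * D \<omega>)\<^sup>2 / 2)"
      using assms(5) by (intro mult_left_mono exp_minus_half_square_le)
    then show "G \<omega> * exp (l * D \<omega> - (l * D \<omega>)\<^sup>2 / 2) \<le> G \<omega> + l * (G \<omega> * D \<omega>) + l\<^sup>2 / 2 * (G \<omega> * (D \<omega>)\<^sup>2)"
      by (simp add: algebra_simps power2_eq_square)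
  qed
  also have "\<dots> = (\<integral>\<omega>. G \<omega> \<partial>M) + l * (\<integral>\<omega>. G \<omega> * D \<omega> \<partial>M) + l\<^sup>2 / 2 * (\<integral>\<omega>. G \<omega> * (D \<omega>)\<^sup>2 \<partial>M)"
    using integrable_G integrable_GD integrable_GD2 by simp
  also have "\<dots> = (\<integral>\<omega>. G \<omega> + l\<^sup>2 / 2 * (G \<omega> * real_cond_exp M (F s) (\<lambda>\<eta>. (D \<eta>)\<^sup>2) \<omega>) \<partial>M)"
    using integral_mult_increment_eq_0[OF assms(2-4)] integral_mult_square_increment[OF assms(2-4)]
      integrable_G integrable_bounded_mult[OF real_cond_exp_int(1)[OF integrable_square_increment] G_M assms(4)] s_le
    unfolding D_def by simp
  finally show ?thesis .
qed

lemma exp_supermartingale_step: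
  assumes "s < n" "B \<in> sets (F s)"
  shows "(\<integral>\<omega>. exp_supermartingale l (Suc s) \<omega> * indicator B \<omega> \<partial>M)
    \<le> (\<integral>\<omega>. exp_supermartingale l s \<omega> * indicator B \<omega> \<partial>M)"
proof -
  let ?W = "exp_supermartingale l"
  define D where "D \<omega> = X (Suc s) \<omega> - X s \<omega>" for \<omega>
  define C where "C = real_cond_exp M (F s) (\<lambda>\<eta>. (D \<eta>)\<^sup>2)"
  define G where "G \<omega> = ?W s \<omega> * indicator B \<omega> * exp (- (l\<^sup>2 / 2) * C \<omega>)" for \<omega>
  interpret sigma_finite_subalgebra M "F s"
    using assms(1) sigma_finite_subalgebra_F by simp
  have s_le: "s \<le> n" "Suc s \<le> n"
    using assms(1) by auto
  have B_M: "B \<in> sets M"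
    using assms(2) subalgebra_F[OF s_le(1)] by (auto simp: subalgebra_def)
  have G_F: "G \<in> borel_measurable (F s)"
    unfolding G_def C_def using exp_supermartingale_measurable_F[OF s_le(1)] assms(2) by measurable
  have G_nonneg: "0 \<le> G \<omega>" for \<omega>
    unfolding G_def using exp_supermartingale_pos[of l s \<omega>] by simp
  have C_nonneg: "AE \<omega> in M. 0 \<le> C \<omega>"
    unfolding C_def D_def using s_le X_measurable by (intro real_cond_exp_pos) auto
  have G_bounded: "AE \<omega> in M. \<bar>G \<omega>\<bar> \<le> exp (real s / 2)"
    using C_nonneg exp_supermartingale_bounded[OF s_le(1), of l]
  proof eventually_elim
    case (elim \<omega>)
    have "G \<omega> \<le> ?W s \<omega> * 1 * 1"
      unfolding G_def using elim exp_supermartingale_pos[of l s \<omega>]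
      by (intro mult_mono) (auto simp: indicator_def)
    then show ?case
      using G_nonneg[of \<omega>] elim by simp
  qed
  have "?W (Suc s) \<omega> * indicator B \<omega> = G \<omega> * exp (l * D \<omega> - (l * D \<omega>)\<^sup>2 / 2)" for \<omega>
    unfolding G_def C_def D_def exp_supermartingale_Suc by (simp add: mult_ac)
  then have "(\<integral>\<omega>. ?W (Suc s) \<omega> * indicator B \<omega> \<partial>M) \<le> (\<integral>\<omega>. G \<omega> + l\<^sup>2 / 2 * (G \<omega> * C \<omega>) \<partial>M)"
    using integral_mult_exp_increment_le[OF assms(1) G_F G_bounded G_nonneg] by (simp add: C_def D_def)
  also have "\<dots> \<le> (\<integral>\<omega>. ?W s \<omega> * indicator B \<omega> \<partial>M)"
  proof (rule integral_mono)
    have "G \<in> borel_measurable M"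
      using measurable_F_M[OF s_le(1) G_F] .
    then have "integrable M (\<lambda>\<omega>. G \<omega> * C \<omega>)"
      unfolding C_def D_def using integrable_square_increment[OF s_le(2)]
      by (intro integrable_bounded_mult[OF real_cond_exp_int(1) _ G_bounded])
    moreover have "integrable M G"
      using integrable_bounded_mult[OF integrable_const[of 1] \<open>G \<in> borel_measurable M\<close> G_bounded] by simp
    ultimately show "integrable M (\<lambda>\<omega>. G \<omega> + l\<^sup>2 / 2 * (G \<omega> * C \<omega>))"
      by simp
    show "integrable M (\<lambda>\<omega>. ?W s \<omega> * indicator B \<omega>)"
      using B_M integrable_exp_supermartingale[OF s_le(1)] by (rule integrable_real_mult_indicator)
    fix \<omega>
    define u where "u = l\<^sup>2 / 2 * C \<omega>"
    have "exp (- u) * (1 + u) \<le> exp (- u) * exp u"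
      by (intro mult_left_mono exp_ge_add_one_self) simp
    then have "exp (- u) * (1 + u) \<le> 1"
      by (simp add: exp_minus field_simps)
    then have "?W s \<omega> * indicator B \<omega> * (exp (- u) * (1 + u)) \<le> ?W s \<omega> * indicator B \<omega>"
      using exp_supermartingale_pos[of l s \<omega>] by (intro mult_left_le) auto
    then show "G \<omega> + l\<^sup>2 / 2 * (G \<omega> * C \<omega>) \<le> ?W s \<omega> * indicator B \<omega>"
      unfolding G_def u_def by (simp add: algebra_simps)
  qed
  finally show ?thesis .
qed

lemma prob_exp_supermartingale_ge:
  assumes "0 < c"
  shows "prob {\<omega> \<in> space M. \<exists>t\<le>n. c \<le> exp_supermartingale l t \<omega>} \<le> 1 / c"
proof -
  have "c * prob {\<omega> \<in> space M. \<exists>t\<le>n. c \<le> exp_supermartingale l t \<omega>}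
      \<le> (\<integral>\<omega>. exp_supermartingale l 0 \<omega> \<partial>M)"
    using subalgebra_F subalgebra_F_mono exp_supermartingale_measurable_F integrable_exp_supermartingale
      exp_supermartingale_pos exp_supermartingale_step assms
    by (intro nonneg_supermartingale_maximal_ineq) (auto intro: less_imp_le)
  also have "\<dots> = 1"
    using prob_space by (simp add: exp_supermartingale_0 cong: Bochner_Integration.integral_cong)
  finally show ?thesis
    using assms by (simp add: field_simps)
qed

lemma prob_bernstein_event_le:
  assumes "0 < x" "0 < \<beta>" "0 \<le> \<alpha>"
  shows "prob {\<omega> \<in> space M. \<exists>t\<in>{1..n}. x \<le> X t \<omega> \<and>
      cond_var M F X t \<omega> + quad_var X t \<omega> \<le> \<alpha> * X t \<omega> + \<beta>}
    \<le> exp (- (x\<^sup>2 / (2 * (\<alpha> * x + \<beta>))))"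
proof -
  define l where "l = x / (\<alpha> * x + \<beta>)"
  define c where "c = exp (x\<^sup>2 / (2 * (\<alpha> * x + \<beta>)))"
  have "{\<omega> \<in> space M. \<exists>t\<in>{1..n}. x \<le> X t \<omega> \<and>
      cond_var M F X t \<omega> + quad_var X t \<omega> \<le> \<alpha> * X t \<omega> + \<beta>}
    \<subseteq> {\<omega> \<in> space M. \<exists>t\<le>n. c \<le> exp_supermartingale l t \<omega>}"
    using bernstein_exponent_le[OF assms] unfolding c_def l_def exp_supermartingale_def
    by fastforce
  then have "prob {\<omega> \<in> space M. \<exists>t\<in>{1..n}. x \<le> X t \<omega> \<and>
      cond_var M F X t \<omega> + quad_var X t \<omega> \<le> \<alpha> * X t \<omega> + \<beta>}
    \<le> prob {\<omega> \<in> space M. \<exists>t\<le>n. c \<le> exp_supermartingale l t \<omega>}"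
    using exp_supermartingale_measurable by (intro finite_measure_mono) measurable
  also have "\<dots> \<le> 1 / c"
    unfolding c_def by (rule prob_exp_supermartingale_ge) simp
  finally show ?thesis
    by (simp add: c_def exp_minus field_simps)
qed

end

theorem proposition1:
  fixes P :: "'a measure" and F :: "nat \<Rightarrow> 'a measure" and X :: "nat \<Rightarrow> 'a \<Rightarrow> real"
    and n :: nat and x \<alpha> \<beta> :: real
  assumes "prob_space P"
    and "sq_int_martingale P F n X"
    and "\<forall>\<omega>\<in>space P. X 0 \<omega> = 0"
    and "x > 0" and "\<beta> > 0" and "\<alpha> \<ge> 0"
  shows "measure P {\<omega> \<in> space P. \<exists>t\<in>{1..n}. X t \<omega> \<ge> x \<and>
            cond_var P F X t \<omega> + quad_var X t \<omega> \<le> \<alpha> * X t \<omega> + \<beta>}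
         \<le> (if \<alpha> = 0 then exp (- (x\<^sup>2 / (8 * \<beta>)))
            else exp (- min (x\<^sup>2 / (8 * \<beta>)) (x / (6 * \<alpha>))))"
proof -
  interpret zero_start_martingale P F n X
    using assms(1-3) by (simp add: zero_start_martingale_def zero_start_martingale_axioms_def)
  show ?thesis
    using prob_bernstein_event_le[OF assms(4-6)] exp_bernstein_exponent_le[OF assms(4-6)]
    by linarith
qed

end
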